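(* Let $g:(0,\infty)\to(0,\infty)$ be decreasing with $\lim_{t\to\infty}g(t)=0$ and $\sup_{t>0}g(t)/g(2t)<\infty$, and assume $\lim_{t\to+\infty}g(t)/g(2t)=2$ (respectively, $\lim_{t\to0}g(t)/g(2t)=2$). For $x\in\ell_\infty(\mathbb Z)$ let $D_gx=\sum_{n\in\mathbb Z}x_ng(2^n)\chi_{[2^n,2^{n+1})}$ (a function on $(0,\infty)$), let $(D_gx)^*$ be its decreasing rearrangement, and set $$\Phi_g(D_gx)=\left\{\frac{1}{2^ng(2^n)}\int_{2^n}^{2^{n+1}}(D_gx)^*(s)\,ds\right\}_{n\in\mathbb Z}.$$ Then $\theta(x)=\theta(\Phi_g(D_gx))$ for every $0\le x\in\ell_\infty(\mathbb Z)$ and every continuous $S_+$-invariant linear functional $\theta$ on $\ell_\infty(\mathbb Z)$ supported at $+\infty$ (respectively, supported at $-\infty$).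
   Context: $\ell_\infty(\mathbb Z)$ is the space of bounded two-sided complex sequences with sup-norm; $(S_+x)_n=x_{n-1}$; $\theta$ is $S_+$-invariant if $\theta(S_+x)=\theta(x)$ for all $x$. $\theta$ is supported at $+\infty$ if $\theta(x\chi_{(-\infty,a)})=0$ for all $x\in\ell_\infty(\mathbb Z)$, $a\in\mathbb Z$, and supported at $-\infty$ if $\theta(x\chi_{(a,\infty)})=0$ for all $x$, $a$. The decreasing rearrangement of a measurable $h$ on $(0,\infty)$ is $h^*(t)=\inf\{s\ge0: m(\{|h|>s\})\le t\}$, $m$ Lebesgue measure. (Equivalently, $\Phi_g(D_gx)=\Phi_g(\mathcal D_gx)$ where $\mathcal D_gx$ is any $\tau$-measurable operator with $\mu(\mathcal D_gx)=(D_gx)^*$.) *)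

theory Defs
  imports "HOL-Analysis.Analysis"
begin

definition linf :: "(int \<Rightarrow> complex) set" where
  "linf = {x. bounded (range x)}"

definition supnorm :: "(int \<Rightarrow> complex) \<Rightarrow> real" where
  "supnorm x = (SUP n. norm (x n))"

text \<open>Continuous (w.r.t. the sup-norm) complex-linear functional on \<open>\<ell>\<^sub>\<infinity>(\<int>)\<close>;
  only its values on \<open>linf\<close> matter.\<close>
definition cont_lin_functional :: "((int \<Rightarrow> complex) \<Rightarrow> complex) \<Rightarrow> bool" where
  "cont_lin_functional \<theta> \<longleftrightarrow>
     (\<forall>x\<in>linf. \<forall>y\<in>linf. \<theta> (\<lambda>n. x n + y n) = \<theta> x + \<theta> y) \<and>
     (\<forall>c. \<forall>x\<in>linf. \<theta> (\<lambda>n. c * x n) = c * \<theta> x) \<and>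
     (\<forall>x\<in>linf. \<forall>e>0. \<exists>d>0. \<forall>y\<in>linf. supnorm (\<lambda>n. y n - x n) < d \<longrightarrow> norm (\<theta> y - \<theta> x) < e)"

definition shift_plus :: "(int \<Rightarrow> 'a) \<Rightarrow> int \<Rightarrow> 'a" where
  "shift_plus x = (\<lambda>n. x (n - 1))"

definition shift_invariant :: "((int \<Rightarrow> complex) \<Rightarrow> complex) \<Rightarrow> bool" where
  "shift_invariant \<theta> \<longleftrightarrow> (\<forall>x\<in>linf. \<theta> (shift_plus x) = \<theta> x)"

definition supported_pinf :: "((int \<Rightarrow> complex) \<Rightarrow> complex) \<Rightarrow> bool" where
  "supported_pinf \<theta> \<longleftrightarrow> (\<forall>x\<in>linf. \<forall>a::int. \<theta> (\<lambda>n. if n < a then x n else 0) = 0)"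

definition supported_minf :: "((int \<Rightarrow> complex) \<Rightarrow> complex) \<Rightarrow> bool" where
  "supported_minf \<theta> \<longleftrightarrow> (\<forall>x\<in>linf. \<forall>a::int. \<theta> (\<lambda>n. if a < n then x n else 0) = 0)"

text \<open>\<open>D\<^sub>g x = \<Sum>\<^sub>n x\<^sub>n g(2^n) \<chi>\<^bsub>[2^n,2^(n+1))\<^esub>\<close> as a function on \<open>(0,\<infinity>)\<close>
  (set to 0 outside \<open>(0,\<infinity>)\<close>); for \<open>t \<in> [2^n,2^(n+1))\<close> one has \<open>n = \<lfloor>log 2 t\<rfloor>\<close>.\<close>
definition Dg :: "(real \<Rightarrow> real) \<Rightarrow> (int \<Rightarrow> real) \<Rightarrow> real \<Rightarrow> real" where
  "Dg g x t = (if 0 < t then x \<lfloor>log 2 t\<rfloor> * g (2 powr of_int \<lfloor>log 2 t\<rfloor>) else 0)"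

definition drearr :: "(real \<Rightarrow> real) \<Rightarrow> real \<Rightarrow> real" where
  "drearr h t = Inf {s. 0 \<le> s \<and> emeasure lborel {u \<in> {0<..}. s < \<bar>h u\<bar>} \<le> ennreal t}"

definition Phi_g :: "(real \<Rightarrow> real) \<Rightarrow> (real \<Rightarrow> real) \<Rightarrow> int \<Rightarrow> real" where
  "Phi_g g f n = (1 / (2 powr of_int n * g (2 powr of_int n))) *
      integral {2 powr of_int n .. 2 powr of_int (n + 1)} (drearr f)"

end

theory Submission
  imports Defs "HOL-Real_Asymp.Real_Asymp"
begin

text \<open>Write \<open>v k = x k * g (2^k)\<close>, so that \<open>D_g x\<close> is the step function equal to \<open>v k\<close>
  on \<open>[2^k, 2^(k+1))\<close>, and put \<open>h n = 2^n * g (2^n)\<close>. Comparing, level by level, the measure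
  of \<open>{(D_g x)^* > s}\<close> inside \<open>[2^n, 2^(n+1)]\<close> with that of \<open>{D_g x > s}\<close> inside block \<open>n\<close>,
  and integrating over \<open>s\<close> (layer cake), gives
  \<open>\<integral> over [2^n, 2^(n+1)] of (D_g x)^* = 2^n * v n + E n - E (n - 1)\<close>,
  where \<open>E n \<ge> 0\<close> is the contribution of the blocks beyond \<open>n\<close> to the integral of
  \<open>(D_g x)^*\<close> over \<open>(0, 2^(n+1))\<close>. Those blocks have height at most \<open>\<parallel>x\<parallel> * g (2^(n+1))\<close>,
  so \<open>E n \<le> \<parallel>x\<parallel> * h (n+1)\<close>. Dividing by \<open>h n\<close>,
  \<open>Phi_g (D_g x) n = x n + (w n - w (n - 1)) + r n\<close> with \<open>w n = E n / h (n+1) \<in> [0, \<parallel>x\<parallel>]\<close>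
  and \<open>r n = w n * (h (n+1) / h n - 1)\<close>. Shift invariance kills the coboundary \<open>w - S_+ w\<close>.
  Since \<open>h (n+1) / h n = 2 / (g (2^n) / g (2^(n+1)))\<close> tends to \<open>1\<close> at the end where
  \<open>g t / g (2t) \<rightarrow> 2\<close>, \<open>r\<close> vanishes there and is killed by a functional supported at that end.\<close>

definition dyadic_blocks :: "(int \<Rightarrow> bool) \<Rightarrow> real set" where
  "dyadic_blocks P = {u. 0 < u \<and> P \<lfloor>log 2 u\<rfloor>}"

lemma dyadic_blocks_mono: "(\<And>k. P k \<Longrightarrow> Q k) \<Longrightarrow> dyadic_blocks P \<subseteq> dyadic_blocks Q"
  by (auto simp: dyadic_blocks_def)

lemma dyadic_blocks_eq_atLeastLessThan:
  "dyadic_blocks (\<lambda>k. k = n) = {2 powr of_int n..<2 powr of_int (n + 1)}"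
proof -
  have "0 < u \<and> \<lfloor>log 2 u\<rfloor> = n \<longleftrightarrow> 2 powr of_int n \<le> u \<and> u < 2 powr of_int (n + 1)" for u :: real
  proof (cases "0 < u")
    case False
    then show ?thesis using powr_gt_zero[of 2 "of_int n"] by (smt (verit))
  qed (use floor_log_eq_powr_iff[of u 2 n] in simp)
  then show ?thesis unfolding dyadic_blocks_def set_eq_iff atLeastLessThan_iff mem_Collect_eq by blast
qed

lemma dyadic_blocks_lessThan: "dyadic_blocks (\<lambda>k. k < m) = {0<..<2 powr of_int m}"
  by (auto simp: dyadic_blocks_def floor_less_iff log_less_iff)

lemma dyadic_blocks_atMost_subset:
  "dyadic_blocks (\<lambda>k. k \<le> n \<and> Q k) \<subseteq> {0<..<2 powr of_int (n + 1)}"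
  by (auto simp: dyadic_blocks_def floor_le_iff log_less_iff)

lemma sets_dyadic_blocks [measurable, simp]: "dyadic_blocks P \<in> sets borel"
proof -
  have "dyadic_blocks P = (\<Union>k\<in>{k. P k}. dyadic_blocks (\<lambda>j. j = k))"
    by (auto simp: dyadic_blocks_def)
  also have "\<dots> \<in> sets borel"
    by (intro sets.countable_UN'') (auto simp: dyadic_blocks_eq_atLeastLessThan)
  finally show ?thesis .
qed

lemma emeasure_dyadic_block:
  "emeasure lborel (dyadic_blocks (\<lambda>k. k = n \<and> Q k)) = (if Q n then ennreal (2 powr of_int n) else 0)"
proof (cases "Q n")
  case True
  then have "dyadic_blocks (\<lambda>k. k = n \<and> Q k) = dyadic_blocks (\<lambda>k. k = n)"
    by (auto simp: dyadic_blocks_def)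
  moreover have "(2::real) powr of_int (n + 1) - 2 powr of_int n = 2 powr of_int n"
    by (simp add: powr_add)
  ultimately show ?thesis using True by (simp add: dyadic_blocks_eq_atLeastLessThan)
next
  case False
  then have "dyadic_blocks (\<lambda>k. k = n \<and> Q k) = {}" by (auto simp: dyadic_blocks_def)
  then show ?thesis using False by simp
qed

lemma nn_integral_layer_cake:
  fixes \<phi> :: "real \<Rightarrow> real"
  assumes [measurable]: "\<phi> \<in> borel_measurable borel" "A \<in> sets borel"
    and nonneg: "\<And>t. 0 \<le> \<phi> t"
  shows "(\<integral>\<^sup>+t. indicator A t * ennreal (\<phi> t) \<partial>lborel)
       = (\<integral>\<^sup>+s. indicator {0<..} s * emeasure lborel {t\<in>A. s < \<phi> t} \<partial>lborel)"
proof -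
  define U where "U = {(t, s). t \<in> A \<and> 0 < s \<and> s < \<phi> t}"
  have "Measurable.pred (borel \<Otimes>\<^sub>M borel) (\<lambda>p::real \<times> real. fst p \<in> A \<and> 0 < snd p \<and> snd p < \<phi> (fst p))"
    by measurable
  then have "U \<in> sets (lborel \<Otimes>\<^sub>M lborel)"
    by (simp add: pred_def U_def space_pair_measure case_prod_unfold cong: measurable_cong_sets)
  then have U: "(\<lambda>(t, s). indicator U (t, s) :: ennreal) \<in> borel_measurable (lborel \<Otimes>\<^sub>M lborel)"
    by (simp add: case_prod_unfold)
  have "(\<integral>\<^sup>+t. indicator A t * ennreal (\<phi> t) \<partial>lborel) = (\<integral>\<^sup>+t. \<integral>\<^sup>+s. indicator U (t, s) \<partial>lborel \<partial>lborel)"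
  proof (rule nn_integral_cong)
    fix t
    have "(\<integral>\<^sup>+s. indicator U (t, s) \<partial>lborel) = (\<integral>\<^sup>+s. indicator A t * indicator {0<..<\<phi> t} s \<partial>lborel)"
      by (intro nn_integral_cong) (auto simp: indicator_def U_def)
    also have "\<dots> = indicator A t * ennreal (\<phi> t)"
      using nonneg[of t] by (subst nn_integral_cmult) auto
    finally show "indicator A t * ennreal (\<phi> t) = (\<integral>\<^sup>+s. indicator U (t, s) \<partial>lborel)" ..
  qed
  also have "\<dots> = (\<integral>\<^sup>+s. \<integral>\<^sup>+t. indicator U (t, s) \<partial>lborel \<partial>lborel)"
    using lborel_pair.Fubini'[OF U] by simp
  also have "\<dots> = (\<integral>\<^sup>+s. indicator {0<..} s * emeasure lborel {t\<in>A. s < \<phi> t} \<partial>lborel)"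
  proof (rule nn_integral_cong)
    fix s
    have "(\<integral>\<^sup>+t. indicator U (t, s) \<partial>lborel) = (\<integral>\<^sup>+t. indicator {0<..} s * indicator {t\<in>A. s < \<phi> t} t \<partial>lborel)"
      by (intro nn_integral_cong) (auto simp: indicator_def U_def)
    then show "(\<integral>\<^sup>+t. indicator U (t, s) \<partial>lborel) = indicator {0<..} s * emeasure lborel {t\<in>A. s < \<phi> t}"
      by (simp add: nn_integral_cmult)
  qed
  finally show ?thesis .
qed

lemma borel_measurable_antimono:
  fixes h :: "real \<Rightarrow> real"
  assumes "antimono h"
  shows "h \<in> borel_measurable borel"
proof -
  have "mono (\<lambda>s. - h s)" using assms by (auto simp: mono_def antimono_def)
  then show ?thesis using borel_measurable_uminus[OF borel_measurable_mono] by fastforce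
qed

lemma integrable_on_antimono_on:
  fixes h :: "real \<Rightarrow> real"
  assumes "\<And>s t. a \<le> s \<Longrightarrow> s \<le> t \<Longrightarrow> t \<le> b \<Longrightarrow> h t \<le> h s"
  shows "h integrable_on {a..b}"
proof -
  have "mono_on {a..b} (\<lambda>t. - h t)" using assms by (auto simp: mono_on_def)
  then show ?thesis using integrable_neg[OF integrable_on_mono_on] by fastforce
qed

lemma nn_integral_pos_add:
  fixes u w :: "real \<Rightarrow> real"
  assumes [measurable]: "u \<in> borel_measurable borel" "w \<in> borel_measurable borel"
    and "\<And>s. 0 \<le> u s" "\<And>s. 0 \<le> w s"
  shows "(\<integral>\<^sup>+s. indicator {0<..} s * ennreal (u s + w s) \<partial>lborel)
       = (\<integral>\<^sup>+s. indicator {0<..} s * ennreal (u s) \<partial>lborel) + (\<integral>\<^sup>+s. indicator {0<..} s * ennreal (w s) \<partial>lborel)"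
  using assms(3,4) by (simp add: ennreal_plus distrib_left nn_integral_add)

locale dyadic_step_function =
  fixes v :: "int \<Rightarrow> real"
  assumes nonneg: "\<And>k. 0 \<le> v k"
    and tendsto_zero: "(v \<longlongrightarrow> 0) at_top"
begin

definition step :: "real \<Rightarrow> real" where
  "step u = (if 0 < u then v \<lfloor>log 2 u\<rfloor> else 0)"

definition distribution :: "real \<Rightarrow> ennreal" where
  "distribution s = emeasure lborel {u \<in> {0<..}. s < \<bar>step u\<bar>}"

abbreviation rearr :: "real \<Rightarrow> real" where
  "rearr \<equiv> drearr step"

lemma distribution_eq: "distribution s = emeasure lborel (dyadic_blocks (\<lambda>k. s < v k))"
proof -
  have "{u \<in> {0<..}. s < \<bar>step u\<bar>} = dyadic_blocks (\<lambda>k. s < v k)"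
    by (auto simp: step_def dyadic_blocks_def abs_of_nonneg[OF nonneg])
  then show ?thesis by (simp add: distribution_def)
qed

lemma distribution_antimono: "s \<le> s' \<Longrightarrow> distribution s' \<le> distribution s"
  unfolding distribution_eq by (intro emeasure_mono dyadic_blocks_mono) auto

lemma distribution_le_if_tail_le:
  assumes "\<And>k. m \<le> k \<Longrightarrow> v k \<le> s"
  shows "distribution s \<le> ennreal (2 powr of_int m)"
proof -
  have "k < m" if "s < v k" for k
    using assms[of k] that by (cases "m \<le> k") auto
  then have "dyadic_blocks (\<lambda>k. s < v k) \<subseteq> dyadic_blocks (\<lambda>k. k < m)"
    by (auto simp: dyadic_blocks_def)
  then have "distribution s \<le> emeasure lborel (dyadic_blocks (\<lambda>k. k < m))"
    unfolding distribution_eq by (intro emeasure_mono) simp_all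
  then show ?thesis by (simp add: dyadic_blocks_lessThan)
qed

lemma eventually_tail_le:
  assumes "0 < s"
  shows "\<exists>m. \<forall>k\<ge>m. v k \<le> s"
proof -
  have "eventually (\<lambda>k. v k < s) at_top" using order_tendstoD(2)[OF tendsto_zero assms] .
  then show ?thesis unfolding eventually_at_top_linorder by (meson less_imp_le)
qed

lemma tail_bounded: "\<exists>B. \<forall>k\<ge>m. v k \<le> B"
proof -
  obtain N where N: "\<And>k. N \<le> k \<Longrightarrow> v k \<le> 1" using eventually_tail_le[of 1] by auto
  define B where "B = Max (insert 1 (v ` {m..<N}))"
  have "v k \<le> B" if "m \<le> k" for k
  proof (cases "k < N")
    case True
    then have "v k \<in> insert 1 (v ` {m..<N})" using that by simp
    then show ?thesis unfolding B_def by (rule Max_ge[rotated]) simp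
  next
    case False
    have "1 \<le> B" unfolding B_def by (rule Max_ge) simp_all
    then show ?thesis using N[of k] False by linarith
  qed
  then show ?thesis by blast
qed

lemma distribution_finite:
  assumes "0 < s"
  shows "distribution s < top"
proof -
  obtain m where "\<forall>k\<ge>m. v k \<le> s" using eventually_tail_le[OF assms] by blast
  then have "distribution s \<le> ennreal (2 powr of_int m)" by (intro distribution_le_if_tail_le) auto
  then show ?thesis using ennreal_less_top[of "2 powr of_int m"] by (rule le_less_trans)
qed

lemma less_distribution_add:
  assumes "ennreal t < distribution s"
  obtains d where "0 < d" "ennreal t < distribution (s + d)"
proof -
  define A where "A n = dyadic_blocks (\<lambda>k. s + 1 / Suc n < v k)" for n :: nat
  have "A n \<subseteq> A (Suc n)" for n
  proof -
    have "s + 1 / Suc (Suc n) \<le> s + 1 / Suc n" by (simp add: frac_le)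
    then show ?thesis unfolding A_def dyadic_blocks_def by (blast intro: le_less_trans)
  qed
  then have "incseq A" by (rule incseq_SucI)
  have union: "(\<Union>n. A n) = dyadic_blocks (\<lambda>k. s < v k)"
  proof (intro equalityI subsetI)
    fix u assume "u \<in> (\<Union>n. A n)"
    then obtain n where "0 < u" "s + 1 / Suc n < v \<lfloor>log 2 u\<rfloor>"
      by (auto simp: A_def dyadic_blocks_def)
    moreover have "s \<le> s + 1 / Suc n" by simp
    ultimately have "s < v \<lfloor>log 2 u\<rfloor>" by linarith
    with \<open>0 < u\<close> show "u \<in> dyadic_blocks (\<lambda>k. s < v k)"
      by (simp add: dyadic_blocks_def)
  next
    fix u assume "u \<in> dyadic_blocks (\<lambda>k. s < v k)"
    then have "0 < u" "0 < v \<lfloor>log 2 u\<rfloor> - s" by (auto simp: dyadic_blocks_def)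
    then obtain n :: nat where "1 / Suc n < v \<lfloor>log 2 u\<rfloor> - s" by (blast elim: nat_approx_posE)
    then have "s + 1 / Suc n < v \<lfloor>log 2 u\<rfloor>" by linarith
    with \<open>0 < u\<close> have "u \<in> A n" by (simp add: A_def dyadic_blocks_def)
    then show "u \<in> (\<Union>n. A n)" by blast
  qed
  have "(SUP n. emeasure lborel (A n)) = emeasure lborel (\<Union>n. A n)"
    by (intro SUP_emeasure_incseq \<open>incseq A\<close>) (auto simp: A_def)
  also have "\<dots> = distribution s" by (simp only: union distribution_eq)
  finally obtain n where "ennreal t < emeasure lborel (A n)"
    using assms by (metis less_SUP_iff)
  then have "ennreal t < distribution (s + 1 / Suc n)" by (simp only: A_def distribution_eq)
  then show ?thesis by (rule that[rotated]) simp
qed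

lemma drearr_step_eq: "rearr t = Inf {s. 0 \<le> s \<and> distribution s \<le> ennreal t}"
  by (simp add: drearr_def distribution_def)

lemma exists_distribution_le:
  assumes "0 < t"
  shows "\<exists>s\<ge>0. distribution s \<le> ennreal t"
proof -
  define m where "m = \<lfloor>log 2 t\<rfloor>"
  obtain B where B: "\<And>k. m \<le> k \<Longrightarrow> v k \<le> B" using tail_bounded by blast
  have "distribution (max 0 B) \<le> ennreal (2 powr of_int m)"
    using B by (intro distribution_le_if_tail_le) (simp add: le_max_iff_disj)
  also have "\<dots> \<le> ennreal t"
    using floor_log_eq_powr_iff[of t 2 m] assms by (simp add: m_def)
  finally show ?thesis by (intro exI[of _ "max 0 B"]) simp
qed

lemma less_rearr_iff:
  assumes t: "0 < t" and s: "0 \<le> s"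
  shows "s < rearr t \<longleftrightarrow> ennreal t < distribution s"
proof
  assume "s < rearr t"
  show "ennreal t < distribution s"
  proof (rule ccontr)
    assume "\<not> ennreal t < distribution s"
    then have "rearr t \<le> s"
      unfolding drearr_step_eq using s by (intro cInf_lower) (auto intro: bdd_belowI[of _ 0])
    with \<open>s < rearr t\<close> show False by simp
  qed
next
  assume "ennreal t < distribution s"
  then obtain d where d: "d > 0" "ennreal t < distribution (s + d)"
    using less_distribution_add by blast
  have "s + d \<le> rearr t" unfolding drearr_step_eq
  proof (rule cInf_greatest)
    show "{s. 0 \<le> s \<and> distribution s \<le> ennreal t} \<noteq> {}" using exists_distribution_le[OF t] by auto
  next
    fix s' assume "s' \<in> {s. 0 \<le> s \<and> distribution s \<le> ennreal t}"
    then have "distribution s' \<le> ennreal t" by simp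
    show "s + d \<le> s'"
    proof (rule ccontr)
      assume "\<not> s + d \<le> s'"
      then have "distribution (s + d) \<le> distribution s'" by (intro distribution_antimono) simp
      with d(2) \<open>distribution s' \<le> ennreal t\<close> show False by simp
    qed
  qed
  with d(1) show "s < rearr t" by simp
qed

lemma rearr_nonneg: "0 < t \<Longrightarrow> 0 \<le> rearr t"
  unfolding drearr_step_eq using exists_distribution_le by (intro cInf_greatest) auto

lemma rearr_antimono:
  assumes "0 < t" "t \<le> t'"
  shows "rearr t' \<le> rearr t"
  unfolding drearr_step_eq
proof (rule cInf_superset_mono)
  show "{s. 0 \<le> s \<and> distribution s \<le> ennreal t} \<noteq> {}" using exists_distribution_le[OF assms(1)] by blast
  show "bdd_below {s. 0 \<le> s \<and> distribution s \<le> ennreal t'}" by (rule bdd_belowI[of _ 0]) simp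
  show "{s. 0 \<le> s \<and> distribution s \<le> ennreal t} \<subseteq> {s. 0 \<le> s \<and> distribution s \<le> ennreal t'}"
    using order_trans[OF _ ennreal_leI[OF assms(2)]] by auto
qed

definition capped :: "real \<Rightarrow> real \<Rightarrow> real" where
  "capped B s = enn2real (min (distribution s) (ennreal B))"

definition partial :: "int \<Rightarrow> real \<Rightarrow> real" where
  "partial n s = measure lborel (dyadic_blocks (\<lambda>k. k \<le> n \<and> s < v k))"

definition excess_density :: "int \<Rightarrow> real \<Rightarrow> real" where
  "excess_density n s = capped (2 powr of_int (n + 1)) s - partial n s"

text \<open>\<open>excess n\<close> is the part of the integral of \<open>rearr\<close> over \<open>(0, 2^(n+1))\<close> that comes
  from the blocks \<open>k > n\<close> of \<open>step\<close>.\<close>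
definition excess :: "int \<Rightarrow> real" where
  "excess n = enn2real (\<integral>\<^sup>+s. indicator {0<..} s * ennreal (excess_density n s) \<partial>lborel)"

lemma emeasure_partial:
  "emeasure lborel (dyadic_blocks (\<lambda>k. k \<le> n \<and> s < v k)) = ennreal (partial n s)"
proof -
  have "emeasure lborel (dyadic_blocks (\<lambda>k. k \<le> n \<and> s < v k)) \<le> emeasure lborel {0<..<(2::real) powr of_int (n + 1)}"
    by (intro emeasure_mono dyadic_blocks_atMost_subset) simp
  also have "\<dots> < top" by simp
  finally show ?thesis unfolding partial_def by (intro emeasure_eq_ennreal_measure) simp
qed

lemma partial_nonneg: "0 \<le> partial n s"
  by (simp add: partial_def)

lemma partial_le: "partial n s \<le> 2 powr of_int (n + 1)"
proof -
  have "ennreal (partial n s) \<le> emeasure lborel {0<..<(2::real) powr of_int (n + 1)}"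
    unfolding emeasure_partial[symmetric] by (intro emeasure_mono dyadic_blocks_atMost_subset) simp
  then show ?thesis by simp
qed

lemma partial_le_distribution: "ennreal (partial n s) \<le> distribution s"
  unfolding emeasure_partial[symmetric] distribution_eq
  by (intro emeasure_mono dyadic_blocks_mono) simp_all

lemma partial_antimono: "s \<le> s' \<Longrightarrow> partial n s' \<le> partial n s"
  unfolding partial_def
  by (intro measure_mono_fmeasurable dyadic_blocks_mono)
     (auto simp: fmeasurable_def emeasure_partial)

lemma partial_step: "partial n s = partial (n - 1) s + (if s < v n then 2 powr of_int n else 0)"
proof -
  have union: "dyadic_blocks (\<lambda>k. k \<le> n \<and> s < v k)
      = dyadic_blocks (\<lambda>k. k \<le> n - 1 \<and> s < v k) \<union> dyadic_blocks (\<lambda>k. k = n \<and> s < v k)"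
    by (auto simp: dyadic_blocks_def)
  have "partial n s = partial (n - 1) s + measure lborel (dyadic_blocks (\<lambda>k. k = n \<and> s < v k))"
    unfolding partial_def union
  proof (rule measure_Union)
    show "emeasure lborel (dyadic_blocks (\<lambda>k. k \<le> n - 1 \<and> s < v k)) \<noteq> \<infinity>"
      unfolding emeasure_partial by simp
    show "emeasure lborel (dyadic_blocks (\<lambda>k. k = n \<and> s < v k)) \<noteq> \<infinity>"
      by (simp add: emeasure_dyadic_block)
  qed (auto simp: dyadic_blocks_def)
  then show ?thesis by (simp add: measure_def emeasure_dyadic_block)
qed

lemma capped_le: "0 \<le> B \<Longrightarrow> capped B s \<le> B"
  using enn2real_mono[of "min (distribution s) (ennreal B)" "ennreal B"] by (simp add: capped_def)

lemma capped_mono: "0 \<le> B \<Longrightarrow> B \<le> B' \<Longrightarrow> capped B s \<le> capped B' s"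
  unfolding capped_def by (intro enn2real_mono min.mono ennreal_leI) (auto simp: min_less_iff_disj)

lemma capped_antimono: "s \<le> s' \<Longrightarrow> capped B s' \<le> capped B s"
  unfolding capped_def
  by (intro enn2real_mono min.mono distribution_antimono) (auto simp: min_less_iff_disj)

lemma capped_eq_partial:
  assumes "\<And>k. n < k \<Longrightarrow> v k \<le> s"
  shows "capped (2 powr of_int (n + 1)) s = partial n s"
proof -
  have "dyadic_blocks (\<lambda>k. s < v k) = dyadic_blocks (\<lambda>k. k \<le> n \<and> s < v k)"
    using assms by (force simp: dyadic_blocks_def not_le[symmetric])
  then have "distribution s = ennreal (partial n s)" by (simp add: distribution_eq emeasure_partial)
  then show ?thesis using partial_le[of n s] partial_nonneg[of n s] by (simp add: capped_def min_def)
qed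

lemma excess_density_nonneg: "0 \<le> excess_density n s"
proof -
  have "ennreal (partial n s) \<le> min (distribution s) (ennreal (2 powr of_int (n + 1)))"
    using partial_le_distribution partial_le by (auto intro: ennreal_leI)
  then have "partial n s \<le> capped (2 powr of_int (n + 1)) s"
    unfolding capped_def using partial_nonneg
    by (metis enn2real_ennreal enn2real_mono ennreal_less_top min_less_iff_disj)
  then show ?thesis by (simp add: excess_density_def)
qed

lemma excess_density_le: "excess_density n s \<le> 2 powr of_int (n + 1)"
  using capped_le[of "2 powr of_int (n + 1)" s] partial_nonneg[of n s] by (simp add: excess_density_def)

lemma borel_measurable_capped [measurable]: "capped B \<in> borel_measurable borel"
  by (rule borel_measurable_antimono) (auto simp: antimono_def capped_antimono)

lemma borel_measurable_partial [measurable]: "partial n \<in> borel_measurable borel"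
  by (rule borel_measurable_antimono) (auto simp: antimono_def partial_antimono)

lemma borel_measurable_excess_density [measurable]: "excess_density n \<in> borel_measurable borel"
  unfolding excess_density_def by measurable

lemma emeasure_rearr_level:
  assumes "0 < s" "0 < a" "a \<le> b"
  shows "emeasure lborel {t \<in> {a..b}. s < rearr t} = ennreal (capped b s - capped a s)"
proof -
  obtain m where m: "distribution s = ennreal m" "0 \<le> m"
    using distribution_finite[OF assms(1)] by (cases "distribution s") (auto simp: top_ennreal_def)
  have capped_m: "capped B s = min m B" if "0 \<le> B" for B
    using that m by (simp add: capped_def min_def ennreal_le_iff)
  have "{t \<in> {a..b}. s < rearr t} = {t \<in> {a..b}. t < m}"
    using less_rearr_iff[of _ s] assms m by (auto simp: ennreal_less_iff)
  also have "emeasure lborel \<dots> = ennreal (min m b - min m a)"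
  proof (cases "m \<le> a")
    case True
    then have "{t \<in> {a..b}. t < m} = {}" by auto
    with True assms show ?thesis by (simp only:) (simp add: min_def)
  next
    case False
    show ?thesis
    proof (cases "m \<le> b")
      case True
      then have "{t \<in> {a..b}. t < m} = {a..<m}" using False by auto
      with True False show ?thesis by (simp only:) (simp add: min_def)
    next
      case False': False
      then have "{t \<in> {a..b}. t < m} = {a..b}" by auto
      with False False' assms show ?thesis by (simp only:) (simp add: min_def)
    qed
  qed
  finally show ?thesis using assms capped_m[of a] capped_m[of b] by simp
qed

lemma rearr_integrable_on: "0 < a \<Longrightarrow> rearr integrable_on {a..b}"
  by (intro integrable_on_antimono_on rearr_antimono) auto

lemma integral_rearr_nonneg: "0 < a \<Longrightarrow> 0 \<le> integral {a..b} rearr"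
  by (intro integral_nonneg rearr_integrable_on rearr_nonneg) auto

lemma nn_integral_rearr_level:
  assumes "0 < a" "a \<le> b"
  shows "(\<integral>\<^sup>+s. indicator {0<..} s * ennreal (capped b s - capped a s) \<partial>lborel)
       = ennreal (integral {a..b} rearr)"
proof -
  define \<phi> where "\<phi> t = rearr (max a t)" for t
  have "antimono \<phi>" using assms(1) by (auto simp: antimono_def \<phi>_def intro!: rearr_antimono)
  then have [measurable]: "\<phi> \<in> borel_measurable borel" by (rule borel_measurable_antimono)
  have \<phi>_nonneg: "0 \<le> \<phi> t" for t using rearr_nonneg[of "max a t"] assms(1) by (simp add: \<phi>_def)
  have "(\<integral>\<^sup>+s. indicator {0<..} s * ennreal (capped b s - capped a s) \<partial>lborel)
      = (\<integral>\<^sup>+s. indicator {0<..} s * emeasure lborel {t\<in>{a..b}. s < \<phi> t} \<partial>lborel)"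
  proof (rule nn_integral_cong)
    fix s
    show "indicator {0<..} s * ennreal (capped b s - capped a s)
        = indicator {0<..} s * emeasure lborel {t\<in>{a..b}. s < \<phi> t}"
    proof (cases "0 < s")
      case True
      have "{t\<in>{a..b}. s < \<phi> t} = {t\<in>{a..b}. s < rearr t}" by (auto simp: \<phi>_def max_def)
      then show ?thesis using emeasure_rearr_level[OF True assms] by simp
    qed simp
  qed
  also have "\<dots> = (\<integral>\<^sup>+t. indicator {a..b} t * ennreal (\<phi> t) \<partial>lborel)"
    by (rule nn_integral_layer_cake[symmetric]) (simp_all add: \<phi>_nonneg)
  also have "\<dots> = (\<integral>\<^sup>+t. ennreal (indicator {a..b} t * rearr t) \<partial>lborel)"
    by (intro nn_integral_cong) (auto simp: indicator_def \<phi>_def max_def)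
  also have "\<dots> = ennreal (integral {a..b} rearr)"
    using assms(1) rearr_nonneg
    by (intro nn_integral_has_integral_lebesgue integrable_integral rearr_integrable_on) auto
  finally show ?thesis .
qed

lemma nn_integral_block_level:
  "(\<integral>\<^sup>+s. indicator {0<..} s * ennreal (if s < v n then 2 powr of_int n else 0) \<partial>lborel)
     = ennreal (2 powr of_int n * v n)"
proof -
  have "(\<integral>\<^sup>+s. indicator {0<..} s * ennreal (if s < v n then 2 powr of_int n else 0) \<partial>lborel)
      = (\<integral>\<^sup>+s. ennreal (2 powr of_int n) * indicator {0<..<v n} s \<partial>lborel)"
    by (intro nn_integral_cong) (auto simp: indicator_def)
  also have "\<dots> = ennreal (2 powr of_int n * v n)"
    using nonneg[of n] by (simp add: nn_integral_cmult ennreal_mult)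
  finally show ?thesis .
qed

lemma nn_integral_excess_density_le:
  assumes B: "\<And>k. n < k \<Longrightarrow> v k \<le> B"
  shows "(\<integral>\<^sup>+s. indicator {0<..} s * ennreal (excess_density n s) \<partial>lborel)
       \<le> ennreal (2 powr of_int (n + 1) * B)"
proof -
  have "0 \<le> B" using B[of "n + 1"] nonneg[of "n + 1"] by simp
  have "(\<integral>\<^sup>+s. indicator {0<..} s * ennreal (excess_density n s) \<partial>lborel)
      \<le> (\<integral>\<^sup>+s. ennreal (2 powr of_int (n + 1)) * indicator {0<..B} s \<partial>lborel)"
  proof (rule nn_integral_mono)
    fix s
    show "indicator {0<..} s * ennreal (excess_density n s) \<le> ennreal (2 powr of_int (n + 1)) * indicator {0<..B} s"
    proof (cases "B < s")
      case True
      then have "capped (2 powr of_int (n + 1)) s = partial n s"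
        using B by (intro capped_eq_partial) (meson less_imp_le order_trans)
      then show ?thesis by (simp add: excess_density_def)
    qed (use excess_density_le[of n s] in \<open>auto simp: indicator_def ennreal_leI\<close>)
  qed
  also have "\<dots> = ennreal (2 powr of_int (n + 1) * B)"
    using \<open>0 \<le> B\<close> by (simp add: nn_integral_cmult ennreal_mult)
  finally show ?thesis .
qed

lemma nn_integral_excess_density:
  "(\<integral>\<^sup>+s. indicator {0<..} s * ennreal (excess_density n s) \<partial>lborel) = ennreal (excess n)"
proof -
  obtain B where "\<And>k. n + 1 \<le> k \<Longrightarrow> v k \<le> B" using tail_bounded by blast
  then have "(\<integral>\<^sup>+s. indicator {0<..} s * ennreal (excess_density n s) \<partial>lborel) \<le> ennreal (2 powr of_int (n + 1) * B)"
    by (intro nn_integral_excess_density_le) auto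
  then have "(\<integral>\<^sup>+s. indicator {0<..} s * ennreal (excess_density n s) \<partial>lborel) < top"
    using ennreal_less_top le_less_trans by blast
  then show ?thesis by (simp add: excess_def less_top)
qed

lemma excess_nonneg: "0 \<le> excess n"
  by (simp add: excess_def)

lemma excess_le:
  assumes "\<And>k. n < k \<Longrightarrow> v k \<le> B"
  shows "excess n \<le> 2 powr of_int (n + 1) * B"
proof -
  have "0 \<le> B" using assms[of "n + 1"] nonneg[of "n + 1"] by simp
  then show ?thesis
    using nn_integral_excess_density_le[OF assms] by (simp add: nn_integral_excess_density ennreal_le_iff)
qed

lemma integral_rearr_dyadic_block:
  "integral {2 powr of_int n..2 powr of_int (n + 1)} rearr + excess (n - 1)
     = 2 powr of_int n * v n + excess n"
proof -
  define a b where "a = (2::real) powr of_int n" and "b = (2::real) powr of_int (n + 1)"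
  have "0 < a" "a \<le> b" by (simp_all add: a_def b_def)
  have level_nonneg: "0 \<le> capped b s - capped a s" for s
    using capped_mono[of a b s] \<open>0 < a\<close> \<open>a \<le> b\<close> by simp
  have "(capped b s - capped a s) + excess_density (n - 1) s
      = (if s < v n then 2 powr of_int n else 0) + excess_density n s" for s
    using partial_step[of n s] by (simp add: excess_density_def a_def b_def)
  then have "(\<integral>\<^sup>+s. indicator {0<..} s * ennreal ((capped b s - capped a s) + excess_density (n - 1) s) \<partial>lborel)
      = (\<integral>\<^sup>+s. indicator {0<..} s * ennreal ((if s < v n then 2 powr of_int n else 0) + excess_density n s) \<partial>lborel)"
    by simp
  moreover have "(\<lambda>s. capped b s - capped a s) \<in> borel_measurable borel"
    and "(\<lambda>s. if s < v n then (2::real) powr of_int n else 0) \<in> borel_measurable borel"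
    by measurable
  moreover have "0 \<le> (if s < v n then (2::real) powr of_int n else 0)" for s
    by simp
  ultimately have "ennreal (integral {a..b} rearr) + ennreal (excess (n - 1))
      = ennreal (2 powr of_int n * v n) + ennreal (excess n)"
    by (simp only: nn_integral_pos_add level_nonneg excess_density_nonneg
        borel_measurable_excess_density nn_integral_rearr_level[OF \<open>0 < a\<close> \<open>a \<le> b\<close>]
        nn_integral_block_level nn_integral_excess_density)
  then show ?thesis
    using integral_rearr_nonneg[OF \<open>0 < a\<close>, of b] excess_nonneg nonneg[of n]
    by (simp add: a_def b_def ennreal_plus[symmetric] del: ennreal_plus)
qed

end

lemma linf_iff_norm_bounded: "z \<in> linf \<longleftrightarrow> (\<exists>B. \<forall>n. norm (z n) \<le> B)"
  unfolding linf_def bounded_iff by auto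

lemma linf_add: "a \<in> linf \<Longrightarrow> b \<in> linf \<Longrightarrow> (\<lambda>n. a n + b n) \<in> linf"
  unfolding linf_iff_norm_bounded by (meson add_mono norm_triangle_ineq order_trans)

lemma linf_mult:
  assumes "a \<in> linf"
  shows "(\<lambda>n. c * a n) \<in> linf"
proof -
  obtain B where "\<And>n. norm (a n) \<le> B" using assms by (auto simp: linf_iff_norm_bounded)
  then have "norm (c * a n) \<le> norm c * B" for n by (simp add: norm_mult mult_left_mono)
  then show ?thesis unfolding linf_iff_norm_bounded by blast
qed

lemma linf_shift_plus: "a \<in> linf \<Longrightarrow> shift_plus a \<in> linf"
  unfolding linf_iff_norm_bounded shift_plus_def by blast

lemma linf_restrict:
  assumes "z \<in> linf"
  shows "(\<lambda>n. if P n then z n else 0) \<in> linf"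
proof -
  obtain B where B: "\<And>n. norm (z n) \<le> B" using assms by (auto simp: linf_iff_norm_bounded)
  moreover have "0 \<le> B" using B[of 0] norm_ge_zero[of "z 0"] by linarith
  ultimately have "norm (if P n then z n else 0) \<le> B" for n by simp
  then show ?thesis unfolding linf_iff_norm_bounded by blast
qed

lemma linf_diff_shift:
  assumes "W \<in> linf"
  shows "(\<lambda>n. W n - W (n - 1)) \<in> linf"
proof -
  obtain B where "\<And>n. norm (W n) \<le> B" using assms by (auto simp: linf_iff_norm_bounded)
  then have "norm (W n - W (n - 1)) \<le> B + B" for n by (meson add_mono norm_triangle_ineq4 order_trans)
  then show ?thesis unfolding linf_iff_norm_bounded by blast
qed

lemma linf_of_real: "(\<And>n. \<bar>a n\<bar> \<le> B) \<Longrightarrow> (\<lambda>n. complex_of_real (a n)) \<in> linf"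
  unfolding linf_iff_norm_bounded by (intro exI[of _ B]) simp

lemma cont_lin_functional_add:
  "cont_lin_functional \<theta> \<Longrightarrow> a \<in> linf \<Longrightarrow> b \<in> linf \<Longrightarrow> \<theta> (\<lambda>n. a n + b n) = \<theta> a + \<theta> b"
  by (simp add: cont_lin_functional_def)

lemma cont_lin_functional_mult:
  "cont_lin_functional \<theta> \<Longrightarrow> a \<in> linf \<Longrightarrow> \<theta> (\<lambda>n. c * a n) = c * \<theta> a"
  by (simp add: cont_lin_functional_def)

lemma cont_lin_functional_zero: "cont_lin_functional \<theta> \<Longrightarrow> \<theta> (\<lambda>n. 0) = 0"
  using cont_lin_functional_mult[of \<theta> "\<lambda>n. 0" 0] by (auto simp: linf_iff_norm_bounded)

lemma cont_lin_functional_small: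
  assumes "cont_lin_functional \<theta>" "0 < e"
  obtains d where "0 < d" "\<And>y. y \<in> linf \<Longrightarrow> (\<forall>n. norm (y n) \<le> d) \<Longrightarrow> norm (\<theta> y) < e"
proof -
  have "(\<lambda>n::int. 0::complex) \<in> linf" by (auto simp: linf_iff_norm_bounded)
  then obtain d where d: "0 < d" "\<And>y. y \<in> linf \<Longrightarrow> supnorm y < d \<Longrightarrow> norm (\<theta> y) < e"
    using assms cont_lin_functional_zero[OF assms(1)] unfolding cont_lin_functional_def by fastforce
  show ?thesis
  proof (rule that[of "d / 2"])
    fix y assume "y \<in> linf" "\<forall>n. norm (y n) \<le> d / 2"
    then have "supnorm y \<le> d / 2" unfolding supnorm_def by (intro cSUP_least) auto
    with d \<open>y \<in> linf\<close> show "norm (\<theta> y) < e" by simp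
  qed (use d in simp)
qed

lemma cont_lin_functional_eq_0_if_small_off:
  assumes cl: "cont_lin_functional \<theta>" and z: "z \<in> linf"
    and small: "\<And>\<epsilon>. 0 < \<epsilon> \<Longrightarrow> \<exists>P. \<theta> (\<lambda>n. if P n then z n else 0) = 0 \<and> (\<forall>n. \<not> P n \<longrightarrow> norm (z n) \<le> \<epsilon>)"
  shows "\<theta> z = 0"
proof (rule ccontr)
  assume "\<theta> z \<noteq> 0"
  then obtain d where d: "0 < d" "\<And>y. y \<in> linf \<Longrightarrow> (\<forall>n. norm (y n) \<le> d) \<Longrightarrow> norm (\<theta> y) < norm (\<theta> z)"
    using cont_lin_functional_small[OF cl, of "norm (\<theta> z)"] by auto
  obtain P where P: "\<theta> (\<lambda>n. if P n then z n else 0) = 0" "\<And>n. \<not> P n \<Longrightarrow> norm (z n) \<le> d"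
    using small[OF d(1)] by blast
  have "\<theta> (\<lambda>n. (if P n then z n else 0) + (if \<not> P n then z n else 0))
      = \<theta> (\<lambda>n. if P n then z n else 0) + \<theta> (\<lambda>n. if \<not> P n then z n else 0)"
    by (rule cont_lin_functional_add[OF cl linf_restrict[OF z] linf_restrict[OF z]])
  moreover have "(\<lambda>n. (if P n then z n else 0) + (if \<not> P n then z n else 0)) = z" by auto
  moreover have "norm (\<theta> (\<lambda>n. if \<not> P n then z n else 0)) < norm (\<theta> z)"
    using P(2) d(1) by (intro d(2) linf_restrict[OF z]) auto
  ultimately show False using P(1) by simp
qed

lemma supported_pinf_eq_0:
  assumes "cont_lin_functional \<theta>" "supported_pinf \<theta>" "z \<in> linf" "(z \<longlongrightarrow> 0) at_top"
  shows "\<theta> z = 0"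
proof (rule cont_lin_functional_eq_0_if_small_off[OF assms(1,3)])
  fix \<epsilon> :: real assume "0 < \<epsilon>"
  then have "eventually (\<lambda>n. norm (z n) < \<epsilon>) at_top"
    using order_tendstoD(2)[OF tendsto_norm_zero[OF assms(4)]] by simp
  then obtain a where "\<And>n. a \<le> n \<Longrightarrow> norm (z n) \<le> \<epsilon>"
    unfolding eventually_at_top_linorder by (meson less_imp_le)
  then show "\<exists>P. \<theta> (\<lambda>n. if P n then z n else 0) = 0 \<and> (\<forall>n. \<not> P n \<longrightarrow> norm (z n) \<le> \<epsilon>)"
    using assms(2,3) unfolding supported_pinf_def by (intro exI[of _ "\<lambda>n. n < a"]) auto
qed

lemma supported_minf_eq_0:
  assumes "cont_lin_functional \<theta>" "supported_minf \<theta>" "z \<in> linf" "(z \<longlongrightarrow> 0) at_bot"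
  shows "\<theta> z = 0"
proof (rule cont_lin_functional_eq_0_if_small_off[OF assms(1,3)])
  fix \<epsilon> :: real assume "0 < \<epsilon>"
  then have "eventually (\<lambda>n. norm (z n) < \<epsilon>) at_bot"
    using order_tendstoD(2)[OF tendsto_norm_zero[OF assms(4)]] by simp
  then obtain a where "\<And>n. n \<le> a \<Longrightarrow> norm (z n) \<le> \<epsilon>"
    unfolding eventually_at_bot_linorder by (meson less_imp_le)
  then show "\<exists>P. \<theta> (\<lambda>n. if P n then z n else 0) = 0 \<and> (\<forall>n. \<not> P n \<longrightarrow> norm (z n) \<le> \<epsilon>)"
    using assms(2,3) unfolding supported_minf_def by (intro exI[of _ "\<lambda>n. a < n"]) auto
qed

lemma shift_invariant_difference_eq_0:
  assumes cl: "cont_lin_functional \<theta>" and "shift_invariant \<theta>" and W: "W \<in> linf"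
  shows "\<theta> (\<lambda>n. W n - W (n - 1)) = 0"
proof -
  have "\<theta> (\<lambda>n. W n - W (n - 1)) = \<theta> (\<lambda>n. W n + (-1) * shift_plus W n)"
    by (simp add: shift_plus_def)
  also have "\<dots> = \<theta> W + \<theta> (\<lambda>n. (-1) * shift_plus W n)"
    by (rule cont_lin_functional_add[OF cl W linf_mult[OF linf_shift_plus[OF W]]])
  also have "\<theta> (\<lambda>n. (-1) * shift_plus W n) = (-1) * \<theta> (shift_plus W)"
    by (rule cont_lin_functional_mult[OF cl linf_shift_plus[OF W]])
  also have "\<theta> (shift_plus W) = \<theta> W"
    using assms(2) W unfolding shift_invariant_def by blast
  finally show ?thesis by simp
qed

lemma filterlim_two_powr_at_top: "filterlim (\<lambda>k::int. (2::real) powr of_int k) at_top at_top"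
proof -
  have "filterlim (\<lambda>t::real. 2 powr t) at_top at_top" by real_asymp
  then show ?thesis using filterlim_compose filterlim_real_of_int_at_top by blast
qed

lemma filterlim_two_powr_at_bot: "filterlim (\<lambda>k::int. (2::real) powr of_int k) (at_right 0) at_bot"
proof -
  have "filterlim (\<lambda>t::real. 2 powr t) (at_right 0) at_bot" by real_asymp
  then show ?thesis using filterlim_compose filterlim_real_of_int_at_bot by blast
qed

locale dyadic_Dg =
  fixes g :: "real \<Rightarrow> real" and x :: "int \<Rightarrow> real" and M :: real
  assumes g_pos: "\<And>t. 0 < t \<Longrightarrow> 0 < g t"
    and g_antimono: "\<And>s t. 0 < s \<Longrightarrow> s \<le> t \<Longrightarrow> g t \<le> g s"
    and g_tendsto_0: "(g \<longlongrightarrow> 0) at_top"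
    and x_nonneg: "\<And>n. 0 \<le> x n"
    and x_le: "\<And>n. x n \<le> M"
begin

lemma M_nonneg: "0 \<le> M"
  using x_nonneg[of 0] x_le[of 0] by linarith

lemma weighted_le:
  assumes "n \<le> k"
  shows "x k * g (2 powr of_int k) \<le> M * g (2 powr of_int n)"
proof (rule mult_mono)
  show "g (2 powr of_int k) \<le> g (2 powr of_int n)" using assms by (intro g_antimono) auto
  show "0 \<le> M" by (rule M_nonneg)
  show "0 \<le> g (2 powr of_int k)" using g_pos[of "2 powr of_int k"] by simp
qed (rule x_le)

sublocale dyadic_step_function "\<lambda>k. x k * g (2 powr of_int k)"
proof
  show nonneg: "0 \<le> x k * g (2 powr of_int k)" for k
    using x_nonneg[of k] g_pos[of "2 powr of_int k"] by simp
  have "((\<lambda>k. M * g (2 powr of_int k)) \<longlongrightarrow> M * 0) at_top"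
    by (intro tendsto_mult tendsto_const filterlim_compose[OF g_tendsto_0 filterlim_two_powr_at_top])
  then have "((\<lambda>k. M * g (2 powr of_int k)) \<longlongrightarrow> 0) at_top" by simp
  then show "((\<lambda>k. x k * g (2 powr of_int k)) \<longlongrightarrow> 0) at_top"
  proof (rule tendsto_sandwich[where h = "\<lambda>k. M * g (2 powr of_int k)",
        OF always_eventually always_eventually tendsto_const, rotated 2])
    show "\<forall>k. 0 \<le> x k * g (2 powr of_int k)" using nonneg by blast
    show "\<forall>k. x k * g (2 powr of_int k) \<le> M * g (2 powr of_int k)"
      using weighted_le[OF order_refl] by blast
  qed
qed

lemma Dg_eq_step: "Dg g x = step"
  by (simp add: fun_eq_iff Dg_def step_def)

definition block_mass :: "int \<Rightarrow> real" where
  "block_mass n = 2 powr of_int n * g (2 powr of_int n)"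

definition corrector :: "int \<Rightarrow> real" where
  "corrector n = excess n / block_mass (n + 1)"

definition remainder :: "int \<Rightarrow> real" where
  "remainder n = corrector n * (block_mass (n + 1) / block_mass n - 1)"

lemma block_mass_pos: "0 < block_mass n"
  using g_pos[of "2 powr of_int n"] by (simp add: block_mass_def)

lemma Phi_g_Dg_eq: "Phi_g g (Dg g x) n = x n + (corrector n - corrector (n - 1)) + remainder n"
proof -
  have "excess n = corrector n * block_mass (n + 1)"
    using block_mass_pos[of "n + 1"] by (simp add: corrector_def)
  moreover have "excess (n - 1) = corrector (n - 1) * block_mass n"
    using block_mass_pos[of n] by (simp add: corrector_def)
  moreover have "2 powr of_int n * (x n * g (2 powr of_int n)) = x n * block_mass n"
    by (simp add: block_mass_def)
  ultimately have "integral {2 powr of_int n..2 powr of_int (n + 1)} rearr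
      = x n * block_mass n + corrector n * block_mass (n + 1) - corrector (n - 1) * block_mass n"
    using integral_rearr_dyadic_block[of n] by linarith
  moreover have "Phi_g g (Dg g x) n = integral {2 powr of_int n..2 powr of_int (n + 1)} rearr / block_mass n"
    by (simp add: Phi_g_def Dg_eq_step block_mass_def)
  ultimately show ?thesis
    using block_mass_pos[of n] by (simp add: remainder_def field_simps)
qed

lemma corrector_nonneg: "0 \<le> corrector n"
  using excess_nonneg[of n] block_mass_pos[of "n + 1"] by (simp add: corrector_def)

lemma corrector_le: "corrector n \<le> M"
proof -
  have "excess n \<le> 2 powr of_int (n + 1) * (M * g (2 powr of_int (n + 1)))"
    by (rule excess_le) (use weighted_le[of "n + 1"] in auto)
  then show ?thesis
    using block_mass_pos[of "n + 1"] by (simp add: corrector_def block_mass_def divide_le_eq mult_ac)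
qed

lemma block_mass_ratio_eq:
  "block_mass (n + 1) / block_mass n = 2 / (g (2 powr of_int n) / g (2 * 2 powr of_int n))"
  using g_pos[of "2 powr of_int n"] g_pos[of "2 * 2 powr of_int n"]
  by (simp add: block_mass_def powr_add field_simps)

lemma abs_block_mass_ratio_le: "\<bar>block_mass (n + 1) / block_mass n - 1\<bar> \<le> 1"
proof -
  have "g (2 * 2 powr of_int n) \<le> g (2 powr of_int n)" by (intro g_antimono) auto
  then have "block_mass (n + 1) / block_mass n \<le> 2"
    using g_pos[of "2 powr of_int n"] by (simp add: block_mass_def powr_add field_simps)
  then show ?thesis using block_mass_pos[of n] block_mass_pos[of "n + 1"] by (simp add: abs_le_iff)
qed

lemma abs_remainder_le: "\<bar>remainder n\<bar> \<le> M * \<bar>block_mass (n + 1) / block_mass n - 1\<bar>"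
  unfolding remainder_def abs_mult using corrector_nonneg[of n] corrector_le[of n]
  by (intro mult_right_mono) auto

lemma remainder_in_linf: "(\<lambda>n. complex_of_real (remainder n)) \<in> linf"
proof (rule linf_of_real)
  show "\<bar>remainder n\<bar> \<le> M" for n
    using abs_remainder_le[of n] mult_left_mono[OF abs_block_mass_ratio_le[of n] M_nonneg] by simp
qed

lemma remainder_tendsto_0:
  assumes "((\<lambda>t. g t / g (2 * t)) \<longlongrightarrow> 2) F'" and "filterlim (\<lambda>n. 2 powr of_int n) F' F"
  shows "(remainder \<longlongrightarrow> 0) F"
proof -
  have "((\<lambda>n. g (2 powr of_int n) / g (2 * 2 powr of_int n)) \<longlongrightarrow> 2) F"
    using filterlim_compose[OF assms] .
  then have "((\<lambda>n. block_mass (n + 1) / block_mass n - 1) \<longlongrightarrow> 2 / 2 - 1) F"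
    unfolding block_mass_ratio_eq by (intro tendsto_intros) auto
  then have "((\<lambda>n. M * \<bar>block_mass (n + 1) / block_mass n - 1\<bar>) \<longlongrightarrow> M * 0) F"
    by (intro tendsto_intros) (simp add: tendsto_rabs_zero_iff)
  then have "((\<lambda>n. M * \<bar>block_mass (n + 1) / block_mass n - 1\<bar>) \<longlongrightarrow> 0) F" by simp
  then show ?thesis
  proof (rule Lim_null_comparison[OF always_eventually, rotated])
    show "\<forall>n. norm (remainder n) \<le> M * \<bar>block_mass (n + 1) / block_mass n - 1\<bar>"
      using abs_remainder_le by simp
  qed
qed

lemma theta_x_eq_theta_Phi_g_Dg:
  assumes cl: "cont_lin_functional \<theta>" and "shift_invariant \<theta>"
    and remainder: "\<theta> (\<lambda>n. complex_of_real (remainder n)) = 0"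
  shows "\<theta> (\<lambda>n. complex_of_real (x n)) = \<theta> (\<lambda>n. complex_of_real (Phi_g g (Dg g x) n))"
proof -
  have X: "(\<lambda>n. complex_of_real (x n)) \<in> linf"
    using x_nonneg x_le by (intro linf_of_real[of _ M]) (simp add: abs_le_iff)
  have C: "(\<lambda>n. complex_of_real (corrector n)) \<in> linf"
    using corrector_nonneg corrector_le by (intro linf_of_real[of _ M]) (simp add: abs_le_iff)
  have "\<theta> (\<lambda>n. complex_of_real (Phi_g g (Dg g x) n))
      = \<theta> (\<lambda>n. (complex_of_real (x n) + complex_of_real (remainder n))
              + (complex_of_real (corrector n) - complex_of_real (corrector (n - 1))))"
    by (rule arg_cong[where f = \<theta>]) (simp add: fun_eq_iff Phi_g_Dg_eq algebra_simps)
  also have "\<dots> = \<theta> (\<lambda>n. complex_of_real (x n) + complex_of_real (remainder n))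
      + \<theta> (\<lambda>n. complex_of_real (corrector n) - complex_of_real (corrector (n - 1)))"
    by (rule cont_lin_functional_add[OF cl linf_add[OF X remainder_in_linf] linf_diff_shift[OF C]])
  also have "\<theta> (\<lambda>n. complex_of_real (x n) + complex_of_real (remainder n))
      = \<theta> (\<lambda>n. complex_of_real (x n)) + \<theta> (\<lambda>n. complex_of_real (remainder n))"
    by (rule cont_lin_functional_add[OF cl X remainder_in_linf])
  finally show ?thesis
    using shift_invariant_difference_eq_0[OF cl \<open>shift_invariant \<theta>\<close> C] remainder by simp
qed

end

lemma dyadic_Dg_exists:
  assumes "\<forall>t>0. 0 < g t" "\<forall>s t. 0 < s \<and> s \<le> t \<longrightarrow> g t \<le> g s" "(g \<longlongrightarrow> 0) at_top"
    and "bounded (range x)" "\<forall>n. 0 \<le> x n"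
  shows "\<exists>M. dyadic_Dg g x M"
proof -
  obtain M where M: "\<And>n. norm (x n) \<le> M" using assms(4) by (auto simp: bounded_iff)
  have "dyadic_Dg g x M"
  proof
    show "0 < g t" if "0 < t" for t using assms(1) that by blast
    show "g t \<le> g s" if "0 < s" "s \<le> t" for s t using assms(2) that by blast
    show "0 \<le> x n" for n using assms(5) by blast
    show "x n \<le> M" for n using M[of n] by (simp add: abs_le_iff)
  qed (fact assms(3))
  then show ?thesis ..
qed

theorem proposition3p4:
  fixes g :: "real \<Rightarrow> real"
  assumes gpos: "\<forall>t>0. 0 < g t"
    and gdec: "\<forall>s t. 0 < s \<and> s \<le> t \<longrightarrow> g t \<le> g s"
    and glim: "(g \<longlongrightarrow> 0) at_top"
    and gbdd: "bdd_above ((\<lambda>t. g t / g (2 * t)) ` {0<..})"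
  shows "(((\<lambda>t. g t / g (2 * t)) \<longlongrightarrow> 2) at_top \<longrightarrow>
            (\<forall>\<theta> x. cont_lin_functional \<theta> \<and> shift_invariant \<theta> \<and> supported_pinf \<theta> \<and>
               bounded (range x) \<and> (\<forall>n. 0 \<le> x n) \<longrightarrow>
               \<theta> (\<lambda>n. complex_of_real (x n)) = \<theta> (\<lambda>n. complex_of_real (Phi_g g (Dg g x) n))))
       \<and> (((\<lambda>t. g t / g (2 * t)) \<longlongrightarrow> 2) (at_right 0) \<longrightarrow>
            (\<forall>\<theta> x. cont_lin_functional \<theta> \<and> shift_invariant \<theta> \<and> supported_minf \<theta> \<and>
               bounded (range x) \<and> (\<forall>n. 0 \<le> x n) \<longrightarrow>
               \<theta> (\<lambda>n. complex_of_real (x n)) = \<theta> (\<lambda>n. complex_of_real (Phi_g g (Dg g x) n))))"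
proof (intro conjI impI allI; elim conjE)
  fix \<theta> and x :: "int \<Rightarrow> real"
  assume lim: "((\<lambda>t. g t / g (2 * t)) \<longlongrightarrow> 2) at_top" and "cont_lin_functional \<theta>" "shift_invariant \<theta>"
    and "supported_pinf \<theta>" "bounded (range x)" "\<forall>n. 0 \<le> x n"
  then obtain M where "dyadic_Dg g x M" using dyadic_Dg_exists[OF gpos gdec glim] by blast
  then interpret dyadic_Dg g x M .
  have "\<theta> (\<lambda>n. complex_of_real (remainder n)) = 0"
    using tendsto_of_real[OF remainder_tendsto_0[OF lim filterlim_two_powr_at_top], where 'a = complex]
    by (intro supported_pinf_eq_0 remainder_in_linf \<open>cont_lin_functional \<theta>\<close> \<open>supported_pinf \<theta>\<close>) simp
  then show "\<theta> (\<lambda>n. complex_of_real (x n)) = \<theta> (\<lambda>n. complex_of_real (Phi_g g (Dg g x) n))"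
    by (rule theta_x_eq_theta_Phi_g_Dg[OF \<open>cont_lin_functional \<theta>\<close> \<open>shift_invariant \<theta>\<close>])
next
  fix \<theta> and x :: "int \<Rightarrow> real"
  assume lim: "((\<lambda>t. g t / g (2 * t)) \<longlongrightarrow> 2) (at_right 0)" and "cont_lin_functional \<theta>" "shift_invariant \<theta>"
    and "supported_minf \<theta>" "bounded (range x)" "\<forall>n. 0 \<le> x n"
  then obtain M where "dyadic_Dg g x M" using dyadic_Dg_exists[OF gpos gdec glim] by blast
  then interpret dyadic_Dg g x M .
  have "\<theta> (\<lambda>n. complex_of_real (remainder n)) = 0"
    using tendsto_of_real[OF remainder_tendsto_0[OF lim filterlim_two_powr_at_bot], where 'a = complex]
    by (intro supported_minf_eq_0 remainder_in_linf \<open>cont_lin_functional \<theta>\<close> \<open>supported_minf \<theta>\<close>) simp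
  then show "\<theta> (\<lambda>n. complex_of_real (x n)) = \<theta> (\<lambda>n. complex_of_real (Phi_g g (Dg g x) n))"
    by (rule theta_x_eq_theta_Phi_g_Dg[OF \<open>cont_lin_functional \<theta>\<close> \<open>shift_invariant \<theta>\<close>])
qed

end
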